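(* Let $n,T\ge1$, $p\ge 1$, $\omega\ge 0$, and data $\dot x^j\in\mathbb{R}^n$, $z^j\in\mathbb{R}^{N_A}$, $v^j\in\mathbb{R}^{N_B}$, $j=0,\dots,T-1$, with $p=N_A+N_B$. Define $c_j:=-\omega I_n+\dot x^j(\dot x^j)^\top$, $b_j:=-\begin{bmatrix}z^j\\ v^j\end{bmatrix}(\dot x^j)^\top\in\mathbb{R}^{p\times n}$, $a_j:=\begin{bmatrix}z^j\\ v^j\end{bmatrix}\begin{bmatrix}z^j\\ v^j\end{bmatrix}^\top\in\mathbb{R}^{p\times p}$, and $Z_0:=[z^0\ \cdots\ z^{T-1}]$, $V_0:=[v^0\ \cdots\ v^{T-1}]$. If the matrix $\begin{bmatrix}Z_0\\ V_0\end{bmatrix}\in\mathbb{R}^{p\times T}$ has full row rank, then there exist a symmetric matrix $A_{\mathrm{i}}\in\mathbb{R}^{p\times p}$, a matrix $B_{\mathrm{i}}\in\mathbb{R}^{p\times n}$ and scalars $\tau_0,\dots,\tau_{T-1}$ satisfying $$\begin{bmatrix}-I-\sum_{j=0}^{T-1}\tau_jc_j & B_{\mathrm{i}}^\top-\sum_{j=0}^{T-1}\tau_jb_j^\top & B_{\mathrm{i}}^\top\\ B_{\mathrm{i}}-\sum_{j=0}^{T-1}\tau_jb_j & A_{\mathrm{i}}-\sum_{j=0}^{T-1}\tau_ja_j & 0\\ B_{\mathrm{i}} & 0 & -A_{\mathrm{i}}\end{bmatrix}\preceq 0,\qquad A_{\mathrm{i}}\succ 0,\qquad \tau_j\ge 0\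 (j=0,\dots,T-1),$$ i.e., the optimization program "minimize $-\log\det A_{\mathrm{i}}$ subject to these constraints" is feasible.
   Context: $\succeq,\preceq$ denote the Loewner order on symmetric matrices; $I$ denotes identity matrices of appropriate size. *)

theory Defs
  imports "Jordan_Normal_Form.DL_Rank"
begin

definition outer :: "real vec \<Rightarrow> real vec \<Rightarrow> real mat" where
  "outer x y = mat_of_cols (dim_vec x) [x] * transpose_mat (mat_of_cols (dim_vec y) [y])"

definition msum :: "nat \<Rightarrow> nat \<Rightarrow> (nat \<Rightarrow> real mat) \<Rightarrow> nat \<Rightarrow> real mat" where
  "msum nr nc F T = mat nr nc (\<lambda>(i,k). \<Sum>j<T. F j $$ (i,k))"

text \<open>Horizontal concatenation [A B] of matrices with equal row counts.\<close>
definition hcat :: "real mat \<Rightarrow> real mat \<Rightarrow> real mat" where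
  "hcat A B = four_block_mat A B (0\<^sub>m 0 (dim_col A)) (0\<^sub>m 0 (dim_col B))"

definition block3 :: "real mat \<Rightarrow> real mat \<Rightarrow> real mat \<Rightarrow> real mat \<Rightarrow> real mat \<Rightarrow> real mat
    \<Rightarrow> real mat \<Rightarrow> real mat \<Rightarrow> real mat \<Rightarrow> real mat" where
  "block3 M11 M12 M13 M21 M22 M23 M31 M32 M33 =
     four_block_mat M11 (hcat M12 M13) (M21 @\<^sub>r M31) (four_block_mat M22 M23 M32 M33)"

definition neg_semidef :: "real mat \<Rightarrow> bool" where
  "neg_semidef M \<longleftrightarrow> M \<in> carrier_mat (dim_row M) (dim_row M) \<and> transpose_mat M = M \<and>
     (\<forall>x \<in> carrier_vec (dim_row M). x \<bullet> (M *\<^sub>v x) \<le> 0)"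

definition pos_def :: "real mat \<Rightarrow> bool" where
  "pos_def M \<longleftrightarrow> M \<in> carrier_mat (dim_row M) (dim_row M) \<and> transpose_mat M = M \<and>
     (\<forall>x \<in> carrier_vec (dim_row M). x \<noteq> 0\<^sub>v (dim_row M) \<longrightarrow> x \<bullet> (M *\<^sub>v x) > 0)"

end

theory Submission
  imports Defs
begin

(* Take B_i = 0, all tau_j = t and A_i = (t/2) * sum_j w_j w_j^T with w_j = [z_j; v_j]; full row rank
   of [Z_0; V_0] makes A_i positive definite.  For B_i = 0 the quadratic form of the LMI at
   (X, Y, Z) is
     -(1 - t omega T) |X|^2 + sum_j (t a_j^2 - t/2 (2 a_j - b_j)^2 - t/2 c_j^2)
   with a_j = x_j.X, b_j = w_j.Y, c_j = w_j.Z.  By Cauchy-Schwarz it is at most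
   -(1 - t (omega T + sum_j |x_j|^2)) |X|^2, which is nonpositive for t = 1 / (1 + omega T + sum_j |x_j|^2). *)

lemma Cauchy_Schwarz_sum:
  fixes a b :: "'i \<Rightarrow> real"
  shows "(\<Sum>i\<in>I. a i * b i)\<^sup>2 \<le> (\<Sum>i\<in>I. (a i)\<^sup>2) * (\<Sum>i\<in>I. (b i)\<^sup>2)"
proof -
  have "0 \<le> (\<Sum>i\<in>I. \<Sum>k\<in>I. (a i * b k - a k * b i)\<^sup>2)"
    by (intro sum_nonneg) simp
  also have "\<dots> = (\<Sum>i\<in>I. \<Sum>k\<in>I. (a i)\<^sup>2 * (b k)\<^sup>2) + (\<Sum>i\<in>I. \<Sum>k\<in>I. (a k)\<^sup>2 * (b i)\<^sup>2)
      - 2 * (\<Sum>i\<in>I. \<Sum>k\<in>I. (a i * b i) * (a k * b k))"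
    by (simp only: sum_distrib_left flip: sum_subtractf sum.distrib)
       (intro sum.cong refl, simp add: power2_eq_square algebra_simps)
  also have "\<dots> = 2 * ((\<Sum>i\<in>I. (a i)\<^sup>2) * (\<Sum>i\<in>I. (b i)\<^sup>2) - (\<Sum>i\<in>I. a i * b i)\<^sup>2)"
    unfolding sum_product power2_eq_square
    by (subst (2) sum.swap) (simp add: mult.commute)
  finally show ?thesis by simp
qed

lemma scalar_prod_self_nonneg:
  fixes v :: "real vec"
  shows "0 \<le> v \<bullet> v"
  using conjugate_square_ge_0_vec[of v] by simp

lemma scalar_prod_square_le:
  fixes x y :: "real vec"
  assumes "x \<in> carrier_vec n" "y \<in> carrier_vec n"
  shows "(x \<bullet> y)\<^sup>2 \<le> (x \<bullet> x) * (y \<bullet> y)"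
  using assms Cauchy_Schwarz_sum[of "\<lambda>i. x $ i" "\<lambda>i. y $ i" "{0..<n}"]
  by (simp add: scalar_prod_def power2_eq_square)

lemma index_outer [simp]:
  "i < dim_vec x \<Longrightarrow> k < dim_vec y \<Longrightarrow> outer x y $$ (i,k) = x $ i * y $ k"
  "dim_row (outer x y) = dim_vec x" "dim_col (outer x y) = dim_vec y"
  by (auto simp: outer_def scalar_prod_def mat_of_cols_index)

lemma outer_carrier: "x \<in> carrier_vec nr \<Longrightarrow> y \<in> carrier_vec nc \<Longrightarrow> outer x y \<in> carrier_mat nr nc"
  by (intro carrier_matI) auto

lemma transpose_outer: "transpose_mat (outer x y) = outer y x"
  by (rule eq_matI) auto

lemma outer_mult_vec: "w \<in> carrier_vec (dim_vec y) \<Longrightarrow> outer x y *\<^sub>v w = (y \<bullet> w) \<cdot>\<^sub>v x"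
  by (rule eq_vecI) (auto simp: scalar_prod_def sum_distrib_left mult_ac)

lemma scalar_prod_outer_mult_vec:
  "u \<in> carrier_vec (dim_vec x) \<Longrightarrow> w \<in> carrier_vec (dim_vec y) \<Longrightarrow>
    u \<bullet> (outer x y *\<^sub>v w) = (u \<bullet> x) * (y \<bullet> w)"
  by (simp add: outer_mult_vec)

lemma smult_mat_mult_vec:
  fixes A :: "'a :: comm_semiring_0 mat"
  assumes "x \<in> carrier_vec (dim_col A)"
  shows "(a \<cdot>\<^sub>m A) *\<^sub>v x = a \<cdot>\<^sub>v (A *\<^sub>v x)"
  using assms by (intro eq_vecI) (auto simp: scalar_prod_def row_def sum_distrib_left mult.assoc)

lemma zero_mat_mult_vec: "v \<in> carrier_vec nc \<Longrightarrow> 0\<^sub>m nr nc *\<^sub>v v = 0\<^sub>v nr"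
  by (intro eq_vecI) (auto simp: scalar_prod_def)

lemma msum_carrier: "msum nr nc F T \<in> carrier_mat nr nc"
  by (simp add: msum_def)

lemma index_msum [simp]:
  "i < nr \<Longrightarrow> k < nc \<Longrightarrow> msum nr nc F T $$ (i,k) = (\<Sum>j<T. F j $$ (i,k))"
  "dim_row (msum nr nc F T) = nr" "dim_col (msum nr nc F T) = nc"
  by (auto simp: msum_def)

lemma scalar_prod_msum_mult_vec:
  assumes F: "\<And>j. j < T \<Longrightarrow> F j \<in> carrier_mat nr nc"
    and y: "y \<in> carrier_vec nr" and x: "x \<in> carrier_vec nc"
  shows "y \<bullet> (msum nr nc (\<lambda>j. \<tau> j \<cdot>\<^sub>m F j) T *\<^sub>v x) = (\<Sum>j<T. \<tau> j * (y \<bullet> (F j *\<^sub>v x)))"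
proof -
  have "y \<bullet> (msum nr nc (\<lambda>j. \<tau> j \<cdot>\<^sub>m F j) T *\<^sub>v x)
      = (\<Sum>i<nr. \<Sum>k<nc. \<Sum>j<T. \<tau> j * (y $ i * F j $$ (i,k) * x $ k))"
    using carrier_matD[OF F] y x
    by (simp add: scalar_prod_def row_def atLeast0LessThan sum_distrib_left sum_distrib_right mult_ac)
  also have "\<dots> = (\<Sum>j<T. \<tau> j * (\<Sum>i<nr. \<Sum>k<nc. y $ i * F j $$ (i,k) * x $ k))"
    by (simp add: sum.swap[of _ "{..<T}"] sum_distrib_left)
  also have "\<dots> = (\<Sum>j<T. \<tau> j * (y \<bullet> (F j *\<^sub>v x)))"
    using carrier_matD[OF F] y x
    by (intro sum.cong refl) (simp add: scalar_prod_def row_def atLeast0LessThan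
        sum_distrib_left mult.assoc)
  finally show ?thesis .
qed

lemma scalar_prod_minus_msum_mult_vec:
  assumes A: "A \<in> carrier_mat nr nc" and F: "\<And>j. j < T \<Longrightarrow> F j \<in> carrier_mat nr nc"
    and y: "y \<in> carrier_vec nr" and x: "x \<in> carrier_vec nc"
  shows "y \<bullet> ((A - msum nr nc (\<lambda>j. \<tau> j \<cdot>\<^sub>m F j) T) *\<^sub>v x)
    = y \<bullet> (A *\<^sub>v x) - (\<Sum>j<T. \<tau> j * (y \<bullet> (F j *\<^sub>v x)))"
  by (simp add: minus_mult_distrib_mat_vec[OF A msum_carrier x] scalar_prod_msum_mult_vec[OF F y x]
      scalar_prod_minus_distrib[OF y mult_mat_vec_carrier[OF A x] mult_mat_vec_carrier[OF msum_carrier x]])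

lemma hcat_carrier: "A \<in> carrier_mat nr nc1 \<Longrightarrow> B \<in> carrier_mat nr nc2 \<Longrightarrow>
    hcat A B \<in> carrier_mat nr (nc1 + nc2)"
  unfolding hcat_def by auto

lemma hcat_mult_vec:
  assumes "A \<in> carrier_mat nr nc1" "B \<in> carrier_mat nr nc2"
    and "x \<in> carrier_vec nc1" "y \<in> carrier_vec nc2"
  shows "hcat A B *\<^sub>v (x @\<^sub>v y) = A *\<^sub>v x + B *\<^sub>v y"
  using assms unfolding hcat_def by (subst four_block_mat_mult_vec) (auto intro!: eq_vecI)

lemma transpose_hcat:
  assumes "A \<in> carrier_mat nr nc1" "B \<in> carrier_mat nr nc2"
  shows "transpose_mat (hcat A B) = transpose_mat A @\<^sub>r transpose_mat B"
  using assms unfolding hcat_def append_rows_def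
  by (subst transpose_four_block_mat[of A nr nc1 B nc2]) auto

lemma transpose_append_rows:
  assumes "A \<in> carrier_mat nr1 nc" "B \<in> carrier_mat nr2 nc"
  shows "transpose_mat (A @\<^sub>r B) = hcat (transpose_mat A) (transpose_mat B)"
  using assms unfolding hcat_def append_rows_def
  by (subst transpose_four_block_mat[of A nr1 nc _ 0]) auto

lemma carrier_vec_append3E:
  assumes "u \<in> carrier_vec (n + p + q)"
  obtains x y z where "x \<in> carrier_vec n" "y \<in> carrier_vec p" "z \<in> carrier_vec q"
    "u = x @\<^sub>v y @\<^sub>v z"
proof
  have "u \<in> carrier_vec (n + (p + q))" using assms by (simp add: add.assoc)
  then show "u = vec_first u n @\<^sub>v vec_first (vec_last u (p + q)) p @\<^sub>v vec_last (vec_last u (p + q)) q"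
    using vec_first_last_append[of "vec_last u (p + q)" p q] by simp
qed simp_all

context
  fixes M11 M12 M13 M21 M22 M23 M31 M32 M33 :: "real mat" and n p q :: nat
  assumes carriers:
    "M11 \<in> carrier_mat n n" "M12 \<in> carrier_mat n p" "M13 \<in> carrier_mat n q"
    "M21 \<in> carrier_mat p n" "M22 \<in> carrier_mat p p" "M23 \<in> carrier_mat p q"
    "M31 \<in> carrier_mat q n" "M32 \<in> carrier_mat q p" "M33 \<in> carrier_mat q q"
begin

lemma block3_carrier:
  "block3 M11 M12 M13 M21 M22 M23 M31 M32 M33 \<in> carrier_mat (n + p + q) (n + p + q)"
  using carriers unfolding block3_def
  by (metis add.assoc carrier_append_rows four_block_carrier_mat hcat_carrier)

lemma transpose_block3:
  "transpose_mat (block3 M11 M12 M13 M21 M22 M23 M31 M32 M33) =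
    block3 (transpose_mat M11) (transpose_mat M21) (transpose_mat M31)
      (transpose_mat M12) (transpose_mat M22) (transpose_mat M32)
      (transpose_mat M13) (transpose_mat M23) (transpose_mat M33)"
  unfolding block3_def
  using carriers
  by (simp add: transpose_four_block_mat[OF carriers(1) hcat_carrier[OF carriers(2,3)]
        carrier_append_rows[OF carriers(4,7)] four_block_carrier_mat[OF carriers(5,9)]]
      transpose_four_block_mat[OF carriers(5,6,8,9)] transpose_hcat transpose_append_rows)

lemma block3_quadratic_form:
  assumes "x \<in> carrier_vec n" "y \<in> carrier_vec p" "z \<in> carrier_vec q"
  shows "(x @\<^sub>v y @\<^sub>v z) \<bullet> (block3 M11 M12 M13 M21 M22 M23 M31 M32 M33 *\<^sub>v (x @\<^sub>v y @\<^sub>v z))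
    = x \<bullet> (M11 *\<^sub>v x) + x \<bullet> (M12 *\<^sub>v y) + x \<bullet> (M13 *\<^sub>v z)
    + y \<bullet> (M21 *\<^sub>v x) + y \<bullet> (M22 *\<^sub>v y) + y \<bullet> (M23 *\<^sub>v z)
    + z \<bullet> (M31 *\<^sub>v x) + z \<bullet> (M32 *\<^sub>v y) + z \<bullet> (M33 *\<^sub>v z)"
proof -
  have yz: "y @\<^sub>v z \<in> carrier_vec (p + q)" using assms by simp
  show ?thesis
    unfolding block3_def
    using carriers assms
    by (simp add: four_block_mat_mult_vec[OF carriers(1) hcat_carrier[OF carriers(2,3)]
          carrier_append_rows[OF carriers(4,7)] four_block_carrier_mat[OF carriers(5,9)] assms(1) yz]
        four_block_mat_mult_vec[OF carriers(5,6,8,9) assms(2,3)]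
        hcat_mult_vec[OF carriers(2,3) assms(2,3)] mat_mult_append[OF carriers(4,7) assms(1)]
        append_vec_add[of _ p _ _ q] scalar_prod_append[of _ n _ "p + q"] scalar_prod_append[of _ p _ q]
        scalar_prod_add_distrib[of _ n] scalar_prod_add_distrib[of _ p] scalar_prod_add_distrib[of _ q])
qed

end

lemma (in vec_space) full_rank_cols_span:
  assumes A: "A \<in> carrier_mat n nc" and r: "rank A = n"
  shows "span (set (cols A)) = carrier_vec n"
proof -
  obtain S where S: "maximal S (\<lambda>T. T \<subseteq> set (cols A) \<and> lin_indpt T)"
    using maximal_exists[of "\<lambda>T. T \<subseteq> set (cols A) \<and> lin_indpt T" "card (set (cols A))" "{}"]
    by (meson List.finite_set card_mono empty_iff empty_subsetI finite_lin_indpt2 rev_finite_subset)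
  have SA: "S \<subseteq> set (cols A)" and li: "lin_indpt S" using S unfolding maximal_def by auto
  have colsC: "set (cols A) \<subseteq> carrier_vec n" using cols_dim A by blast
  have "basis S"
    using dim_li_is_basis[OF fin_dim finite_subset[OF SA] _ li] SA colsC
      rank_card_indpt[OF A S] r dim_is_n by auto
  then have "carrier_vec n \<subseteq> span (set (cols A))"
    unfolding basis_def using span_is_monotone[OF SA] by simp
  then show ?thesis using span_closed[OF colsC] by blast
qed

lemma (in vec_space) orthogonal_cols_full_rank:
  assumes A: "A \<in> carrier_mat n nc" and r: "rank A = n" and y: "y \<in> carrier_vec n"
    and orth: "\<And>c. c \<in> set (cols A) \<Longrightarrow> y \<bullet> c = 0"
  shows "y \<bullet> y = 0"
proof -
  have colsC: "set (cols A) \<subseteq> carrier_vec n" using cols_dim A by blast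
  have "y \<in> orthogonal_complement (set (cols A))"
    unfolding orthogonal_complement_def using y orth by auto
  then have "y \<in> orthogonal_complement (carrier_vec n)"
    using in_orthogonal_complement_span[OF colsC] full_rank_cols_span[OF A r] by simp
  then show ?thesis using y unfolding orthogonal_complement_def by blast
qed

lemma col_append_rows:
  assumes "A \<in> carrier_mat nr1 nc" "B \<in> carrier_mat nr2 nc" "j < nc"
  shows "col (A @\<^sub>r B) j = col A j @\<^sub>v col B j"
  using assms by (intro eq_vecI) (auto simp: append_rows_def)

lemma msum_cong:
  "(\<And>j. j < T \<Longrightarrow> F j = G j) \<Longrightarrow> msum nr nc F T = msum nr nc G T"
  by (simp add: msum_def)

lemma pos_def_gram_full_rank:
  fixes A :: "real mat"
  assumes A: "A \<in> carrier_mat p T" and rank: "vec_space.rank p A = p" and c: "c > 0"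
  shows "pos_def (msum p p (\<lambda>j. c \<cdot>\<^sub>m outer (col A j) (col A j)) T)"
proof -
  let ?G = "msum p p (\<lambda>j. c \<cdot>\<^sub>m outer (col A j) (col A j)) T"
  have colC: "col A j \<in> carrier_vec p" if "j < T" for j
    using A that by simp
  have "y \<bullet> (?G *\<^sub>v y) > 0" if y: "y \<in> carrier_vec p" "y \<noteq> 0\<^sub>v p" for y
  proof -
    have "\<exists>j<T. y \<bullet> col A j \<noteq> 0"
    proof (rule ccontr)
      assume "\<not> ?thesis"
      then have "y \<bullet> v = 0" if "v \<in> set (cols A)" for v
        using that A by (auto simp: cols_def)
      then have "y \<bullet> y = 0"
        by (rule vec_space.orthogonal_cols_full_rank[OF A rank y(1)])
      with y show False using conjugate_square_eq_0_vec[OF y(1)] by simp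
    qed
    then obtain j where "j < T" "y \<bullet> col A j \<noteq> 0" by blast
    moreover have "y \<bullet> (?G *\<^sub>v y) = (\<Sum>j<T. c * (y \<bullet> col A j)\<^sup>2)"
    proof -
      have "outer (col A j) (col A j) \<in> carrier_mat p p" if "j < T" for j
        using outer_carrier[OF colC[OF that] colC[OF that]] .
      moreover have "y \<bullet> (outer (col A j) (col A j) *\<^sub>v y) = (y \<bullet> col A j)\<^sup>2" if "j < T" for j
        using A colC[OF that] y(1)
        by (simp add: scalar_prod_outer_mult_vec comm_scalar_prod[of "col A j" p y] power2_eq_square)
      ultimately show ?thesis
        using y(1) by (simp add: scalar_prod_msum_mult_vec)
    qed
    ultimately show ?thesis
      using c by (simp add: sum_pos2[where i=j])
  qed
  moreover have "transpose_mat ?G = ?G"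
    using A by (intro eq_matI) (auto intro!: sum.cong simp: mult.commute)
  ultimately show ?thesis
    unfolding pos_def_def by (simp add: msum_carrier)
qed

lemma neg_semidefI:
  assumes "M \<in> carrier_mat N N" "transpose_mat M = M" "\<And>u. u \<in> carrier_vec N \<Longrightarrow> u \<bullet> (M *\<^sub>v u) \<le> 0"
  shows "neg_semidef M"
  using assms unfolding neg_semidef_def by auto

lemma lmi_form_nonpos:
  fixes a b c k :: "nat \<Rightarrow> real" and s t \<omega> :: real
  assumes t: "0 \<le> t" "t * (\<omega> * T + (\<Sum>j<T. k j)) \<le> 1" and s: "0 \<le> s"
    and a: "\<And>j. j < T \<Longrightarrow> (a j)\<^sup>2 \<le> k j * s"
  shows "- (1 - t * \<omega> * T) * s
    + (\<Sum>j<T. - t * (a j)\<^sup>2 + 2 * t * a j * b j - t / 2 * (b j)\<^sup>2 - t / 2 * (c j)\<^sup>2) \<le> 0"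
proof -
  have "- t * (a j)\<^sup>2 + 2 * t * a j * b j - t / 2 * (b j)\<^sup>2 - t / 2 * (c j)\<^sup>2 \<le> t * (k j * s)"
    if "j < T" for j
  proof -
    have "- t * (a j)\<^sup>2 + 2 * t * a j * b j - t / 2 * (b j)\<^sup>2 - t / 2 * (c j)\<^sup>2
        = t * (a j)\<^sup>2 - t / 2 * ((2 * a j - b j)\<^sup>2 + (c j)\<^sup>2)"
      by (simp add: power2_eq_square algebra_simps)
    also have "\<dots> \<le> t * (a j)\<^sup>2"
      using t(1) by simp
    also have "\<dots> \<le> t * (k j * s)"
      using t(1) a[OF that] by (rule mult_left_mono[rotated])
    finally show ?thesis .
  qed
  then have "- (1 - t * \<omega> * T) * s
      + (\<Sum>j<T. - t * (a j)\<^sup>2 + 2 * t * a j * b j - t / 2 * (b j)\<^sup>2 - t / 2 * (c j)\<^sup>2)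
    \<le> - (1 - t * \<omega> * T) * s + (\<Sum>j<T. t * (k j * s))"
    by (intro add_left_mono sum_mono) auto
  also have "\<dots> = - (1 - t * (\<omega> * T + (\<Sum>j<T. k j))) * s"
    by (simp add: sum_distrib_left sum_distrib_right algebra_simps)
  also have "\<dots> \<le> 0"
    using t(2) s by (simp add: mult_nonpos_nonneg)
  finally show ?thesis .
qed

(* The LMI of the theorem evaluated at B_i = 0, tau_j = t, A_i = (t/2) * sum_j w_j w_j^T. *)
definition feasibility_lmi ::
    "nat \<Rightarrow> nat \<Rightarrow> nat \<Rightarrow> real \<Rightarrow> real \<Rightarrow> (nat \<Rightarrow> real vec) \<Rightarrow> (nat \<Rightarrow> real vec) \<Rightarrow> real mat" where
  "feasibility_lmi n p T \<omega> t x w = block3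
    (- 1\<^sub>m n - msum n n (\<lambda>j. t \<cdot>\<^sub>m (- (\<omega> \<cdot>\<^sub>m 1\<^sub>m n) + outer (x j) (x j))) T)
    (transpose_mat (0\<^sub>m p n) - msum n p (\<lambda>j. t \<cdot>\<^sub>m transpose_mat (- outer (w j) (x j))) T)
    (transpose_mat (0\<^sub>m p n))
    (0\<^sub>m p n - msum p n (\<lambda>j. t \<cdot>\<^sub>m (- outer (w j) (x j))) T)
    (msum p p (\<lambda>j. (t / 2) \<cdot>\<^sub>m outer (w j) (w j)) T - msum p p (\<lambda>j. t \<cdot>\<^sub>m outer (w j) (w j)) T)
    (0\<^sub>m p p) (0\<^sub>m p n) (0\<^sub>m p p) (- msum p p (\<lambda>j. (t / 2) \<cdot>\<^sub>m outer (w j) (w j)) T)"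

lemma feasibility_lmi_carrier: "feasibility_lmi n p T \<omega> t x w \<in> carrier_mat (n + p + p) (n + p + p)"
  unfolding feasibility_lmi_def by (rule block3_carrier) (auto simp: msum_carrier)

context
  fixes n p T :: nat and \<omega> t :: real and x w :: "nat \<Rightarrow> real vec"
  assumes x: "\<And>j. j < T \<Longrightarrow> x j \<in> carrier_vec n"
    and w: "\<And>j. j < T \<Longrightarrow> w j \<in> carrier_vec p"
begin

lemma transpose_feasibility_lmi:
  "transpose_mat (feasibility_lmi n p T \<omega> t x w) = feasibility_lmi n p T \<omega> t x w"
proof -
  have [simp]: "dim_vec (x j) = n" "dim_vec (w j) = p" if "j < T" for j
    using x[OF that] w[OF that] by auto
  let ?A = "msum p p (\<lambda>j. (t / 2) \<cdot>\<^sub>m outer (w j) (w j)) T"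
  let ?M11 = "- 1\<^sub>m n - msum n n (\<lambda>j. t \<cdot>\<^sub>m (- (\<omega> \<cdot>\<^sub>m 1\<^sub>m n) + outer (x j) (x j))) T"
  let ?M12 = "0\<^sub>m n p - msum n p (\<lambda>j. t \<cdot>\<^sub>m transpose_mat (- outer (w j) (x j))) T"
  let ?M21 = "0\<^sub>m p n - msum p n (\<lambda>j. t \<cdot>\<^sub>m (- outer (w j) (x j))) T"
  let ?M22 = "?A - msum p p (\<lambda>j. t \<cdot>\<^sub>m outer (w j) (w j)) T"
  have sym: "transpose_mat ?M11 = ?M11" "transpose_mat ?M22 = ?M22" "transpose_mat (- ?A) = - ?A"
    by (auto intro!: eq_matI sum.cong simp: mult.commute)
  have M21: "transpose_mat ?M21 = ?M12"
    by (auto intro!: eq_matI sum.cong)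
  then have M12: "transpose_mat ?M12 = ?M21"
    by (metis transpose_transpose)
  show ?thesis
    unfolding feasibility_lmi_def
    by (subst transpose_block3) (auto simp: msum_carrier sym M12 M21)
qed

lemma feasibility_lmi_quadratic_form:
  assumes X: "X \<in> carrier_vec n" and Y: "Y \<in> carrier_vec p" and Z: "Z \<in> carrier_vec p"
  shows "(X @\<^sub>v Y @\<^sub>v Z) \<bullet> (feasibility_lmi n p T \<omega> t x w *\<^sub>v (X @\<^sub>v Y @\<^sub>v Z))
    = - (1 - t * \<omega> * T) * (X \<bullet> X) + (\<Sum>j<T. - t * (x j \<bullet> X)\<^sup>2 + 2 * t * (x j \<bullet> X) * (w j \<bullet> Y)
        - t / 2 * (w j \<bullet> Y)\<^sup>2 - t / 2 * (w j \<bullet> Z)\<^sup>2)"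
proof -
  have term_carriers:
    "- (\<omega> \<cdot>\<^sub>m 1\<^sub>m n) + outer (x j) (x j) \<in> carrier_mat n n"
    "transpose_mat (- outer (w j) (x j)) \<in> carrier_mat n p" "- outer (w j) (x j) \<in> carrier_mat p n"
    "outer (w j) (w j) \<in> carrier_mat p p" if "j < T" for j
    using outer_carrier[OF x[OF that] x[OF that]] outer_carrier[OF w[OF that] x[OF that]]
      outer_carrier[OF w[OF that] w[OF that]] by auto
  have terms:
    "X \<bullet> ((- (\<omega> \<cdot>\<^sub>m 1\<^sub>m n) + outer (x j) (x j)) *\<^sub>v X) = (x j \<bullet> X)\<^sup>2 - \<omega> * (X \<bullet> X)"
    "X \<bullet> (transpose_mat (- outer (w j) (x j)) *\<^sub>v Y) = - ((x j \<bullet> X) * (w j \<bullet> Y))"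
    "Y \<bullet> ((- outer (w j) (x j)) *\<^sub>v X) = - ((x j \<bullet> X) * (w j \<bullet> Y))"
    "Y \<bullet> (outer (w j) (w j) *\<^sub>v Y) = (w j \<bullet> Y)\<^sup>2"
    "Z \<bullet> (outer (w j) (w j) *\<^sub>v Z) = (w j \<bullet> Z)\<^sup>2"
    if "j < T" for j
    using X Y Z x[OF that] w[OF that] outer_carrier[OF x[OF that] x[OF that]]
      comm_scalar_prod[OF X x[OF that]] comm_scalar_prod[OF Y w[OF that]] comm_scalar_prod[OF Z w[OF that]]
    by (simp_all add: add_mult_distrib_mat_vec[of _ n n] scalar_prod_add_distrib[of _ n]
        smult_mat_mult_vec transpose_uminus transpose_outer scalar_prod_outer_mult_vec power2_eq_square)
  have M11: "X \<bullet> ((- 1\<^sub>m n - msum n n (\<lambda>j. t \<cdot>\<^sub>m (- (\<omega> \<cdot>\<^sub>m 1\<^sub>m n) + outer (x j) (x j))) T) *\<^sub>v X)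
      = - (X \<bullet> X) - (\<Sum>j<T. t * ((x j \<bullet> X)\<^sup>2 - \<omega> * (X \<bullet> X)))"
    using X by (simp add: scalar_prod_minus_msum_mult_vec[OF _ term_carriers(1) X X] terms)
  have M12: "X \<bullet> ((transpose_mat (0\<^sub>m p n)
        - msum n p (\<lambda>j. t \<cdot>\<^sub>m transpose_mat (- outer (w j) (x j))) T) *\<^sub>v Y)
      = (\<Sum>j<T. t * ((x j \<bullet> X) * (w j \<bullet> Y)))"
    using X Y
    by (simp add: scalar_prod_minus_msum_mult_vec[OF _ term_carriers(2) X Y] terms zero_mat_mult_vec sum_negf)
  have M21: "Y \<bullet> ((0\<^sub>m p n - msum p n (\<lambda>j. t \<cdot>\<^sub>m (- outer (w j) (x j))) T) *\<^sub>v X)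
      = (\<Sum>j<T. t * ((x j \<bullet> X) * (w j \<bullet> Y)))"
    using X Y
    by (simp add: scalar_prod_minus_msum_mult_vec[OF _ term_carriers(3) Y X] terms zero_mat_mult_vec sum_negf)
  have M22: "Y \<bullet> ((msum p p (\<lambda>j. (t / 2) \<cdot>\<^sub>m outer (w j) (w j)) T
        - msum p p (\<lambda>j. t \<cdot>\<^sub>m outer (w j) (w j)) T) *\<^sub>v Y)
      = (\<Sum>j<T. t / 2 * (w j \<bullet> Y)\<^sup>2) - (\<Sum>j<T. t * (w j \<bullet> Y)\<^sup>2)"
    using Y term_carriers(4)
    by (simp add: scalar_prod_minus_msum_mult_vec[OF msum_carrier term_carriers(4) Y Y]
        scalar_prod_msum_mult_vec terms)
  have M33: "Z \<bullet> (- msum p p (\<lambda>j. (t / 2) \<cdot>\<^sub>m outer (w j) (w j)) T *\<^sub>v Z)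
      = - (\<Sum>j<T. t / 2 * (w j \<bullet> Z)\<^sup>2)"
    using Z term_carriers(4) by (simp add: scalar_prod_msum_mult_vec msum_carrier terms)
  have zeros: "X \<bullet> (transpose_mat (0\<^sub>m p n) *\<^sub>v Z) = 0" "Y \<bullet> (0\<^sub>m p p *\<^sub>v Z) = 0"
    "Z \<bullet> (0\<^sub>m p n *\<^sub>v X) = 0" "Z \<bullet> (0\<^sub>m p p *\<^sub>v Y) = 0"
    using X Y Z by (simp_all add: zero_mat_mult_vec)
  show ?thesis
    unfolding feasibility_lmi_def
    by (subst block3_quadratic_form[OF _ _ _ _ _ _ _ _ _ X Y Z], unfold M11 M12 M21 M22 M33 zeros)
      (simp_all add: msum_carrier minus_carrier_mat uminus_carrier_mat sum.distrib sum_subtractf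
        sum_distrib_left sum_negf sum_divide_distrib algebra_simps)
qed

lemma feasibility_lmi_neg_semidef:
  assumes "0 \<le> t" "t * (\<omega> * T + (\<Sum>j<T. x j \<bullet> x j)) \<le> 1"
  shows "neg_semidef (feasibility_lmi n p T \<omega> t x w)"
proof (rule neg_semidefI[OF feasibility_lmi_carrier transpose_feasibility_lmi])
  fix u :: "real vec" assume "u \<in> carrier_vec (n + p + p)"
  then obtain X Y Z where XYZ: "X \<in> carrier_vec n" "Y \<in> carrier_vec p" "Z \<in> carrier_vec p"
    and u: "u = X @\<^sub>v Y @\<^sub>v Z"
    by (rule carrier_vec_append3E)
  have "0 \<le> X \<bullet> X"
    by (rule scalar_prod_self_nonneg)
  moreover have "(x j \<bullet> X)\<^sup>2 \<le> (x j \<bullet> x j) * (X \<bullet> X)" if "j < T" for j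
    by (rule scalar_prod_square_le[OF x[OF that] XYZ(1)])
  ultimately show "u \<bullet> (feasibility_lmi n p T \<omega> t x w *\<^sub>v u) \<le> 0"
    unfolding u feasibility_lmi_quadratic_form[OF XYZ] using assms by (intro lmi_form_nonpos)
qed

end

theorem mainTheorem2:
  fixes n T NA NB p :: nat and \<omega> :: real
    and xd z v :: "nat \<Rightarrow> real vec"
  assumes "n \<ge> 1" and "T \<ge> 1" and "p \<ge> 1" and "\<omega> \<ge> 0"
    and "p = NA + NB"
    and "\<And>j. j < T \<Longrightarrow> xd j \<in> carrier_vec n"
    and "\<And>j. j < T \<Longrightarrow> z j \<in> carrier_vec NA"
    and "\<And>j. j < T \<Longrightarrow> v j \<in> carrier_vec NB"
    and "vec_space.rank p (mat_of_cols NA (map z [0..<T]) @\<^sub>r mat_of_cols NB (map v [0..<T])) = p"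
  shows "\<exists>Ai Bi (\<tau> :: nat \<Rightarrow> real).
     Ai \<in> carrier_mat p p \<and> transpose_mat Ai = Ai \<and> Bi \<in> carrier_mat p n \<and>
     (let c = (\<lambda>j. - (\<omega> \<cdot>\<^sub>m 1\<^sub>m n) + outer (xd j) (xd j));
          b = (\<lambda>j. - outer (z j @\<^sub>v v j) (xd j));
          a = (\<lambda>j. outer (z j @\<^sub>v v j) (z j @\<^sub>v v j))
      in neg_semidef
           (block3
              (- 1\<^sub>m n - msum n n (\<lambda>j. \<tau> j \<cdot>\<^sub>m c j) T)
              (transpose_mat Bi - msum n p (\<lambda>j. \<tau> j \<cdot>\<^sub>m transpose_mat (b j)) T)
              (transpose_mat Bi)
              (Bi - msum p n (\<lambda>j. \<tau> j \<cdot>\<^sub>m b j) T)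
              (Ai - msum p p (\<lambda>j. \<tau> j \<cdot>\<^sub>m a j) T)
              (0\<^sub>m p p)
              Bi
              (0\<^sub>m p p)
              (- Ai))) \<and>
     pos_def Ai \<and> (\<forall>j < T. \<tau> j \<ge> 0)"
proof -
  let ?M = "mat_of_cols NA (map z [0..<T]) @\<^sub>r mat_of_cols NB (map v [0..<T])"
  have M: "?M \<in> carrier_mat p T"
    unfolding assms(5) by (intro carrier_append_rows) auto
  have col_M: "col ?M j = z j @\<^sub>v v j" if "j < T" for j
    using that assms(7,8) by (subst col_append_rows) auto
  have w: "z j @\<^sub>v v j \<in> carrier_vec p" if "j < T" for j
    using col_M[OF that] col_dim[of ?M j] M by simp
  define K where "K = \<omega> * T + (\<Sum>j<T. xd j \<bullet> xd j)"
  have "0 \<le> K"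
    unfolding K_def using assms(4) by (intro add_nonneg_nonneg sum_nonneg scalar_prod_self_nonneg) auto
  define t where "t = 1 / (1 + K)"
  have t: "0 < t" "t * K \<le> 1"
    unfolding t_def using \<open>0 \<le> K\<close> by (simp_all add: field_simps)
  define Ai where "Ai = msum p p (\<lambda>j. (t / 2) \<cdot>\<^sub>m outer (z j @\<^sub>v v j) (z j @\<^sub>v v j)) T"
  have "pos_def Ai"
    using pos_def_gram_full_rank[OF M assms(9), of "t / 2"] t(1)
    unfolding Ai_def by (simp add: col_M cong: msum_cong)
  moreover have "neg_semidef (feasibility_lmi n p T \<omega> t xd (\<lambda>j. z j @\<^sub>v v j))"
    using feasibility_lmi_neg_semidef[OF assms(6) w] t unfolding K_def by simp
  ultimately show ?thesis
    unfolding Let_def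
    by (intro exI[of _ Ai] exI[of _ "0\<^sub>m p n"] exI[of _ "\<lambda>_. t"])
      (use t(1) in \<open>auto simp: pos_def_def feasibility_lmi_def Ai_def msum_carrier\<close>)
qed

end
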